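(* For bivariate copulas $D,E$, the following are equivalent: (i) $D\le_{\partial_2S}E$; (ii) $\mathcal{T}(D)\ge_{lo}\mathcal{T}(E)$; (iii) $\mathcal{T}(D)\ge_{\partial_2S}\mathcal{T}(E)$; (iv) $\mathcal{T}^2(D)\le_{lo}\mathcal{T}^2(E)$; (v) $\mathcal{T}^2(D)\le_{\partial_2S}\mathcal{T}^2(E)$.
   Context: $\Pi(u,v)=uv$; $\partial_2$ the partial derivative in the second argument; $D\vee E(u,v):=\int_0^1\min\{\partial_2D(u,t),\partial_2E(v,t)\}\,dt$; $\mathcal{T}(C):=C\vee\Pi$, $\mathcal{T}^2=\mathcal{T}\circ\mathcal{T}$. $D\le_{lo}E$ means $D(u,v)\le E(u,v)$ for all $(u,v)\in[0,1]^2$. For measurable $f:(0,1)\to[0,1]$, $f^*$ is the a.e.-unique decreasing function with $\lambda(f^*\le y)=\lambda(f\le y)$ for all $y$; $f\prec_S g$ means $\int_0^vf^*(t)\,dt\le\int_0^vg^*(t)\,dt$ for all $v\in(0,1)$ with equality for $v=1$. $D\le_{\partial_2S}E$ means $\partial_2D(v,\cdot)\prec_S\partial_2E(v,\cdot)$ for all $v\in(0,1)$. *)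

theory Defs
  imports "HOL-Analysis.Analysis"
begin

text \<open>Bivariate copulas, represented as functions real => real => real; only the
values on the unit square are constrained.\<close>
definition copula :: "(real \<Rightarrow> real \<Rightarrow> real) \<Rightarrow> bool" where
  "copula C \<longleftrightarrow>
     (\<forall>u\<in>{0..1}. C u 0 = 0 \<and> C 0 u = 0 \<and> C u 1 = u \<and> C 1 u = u) \<and>
     (\<forall>u1 u2 v1 v2. 0 \<le> u1 \<longrightarrow> u1 \<le> u2 \<longrightarrow> u2 \<le> 1 \<longrightarrow> 0 \<le> v1 \<longrightarrow> v1 \<le> v2 \<longrightarrow> v2 \<le> 1 \<longrightarrow>
        C u1 v1 + C u2 v2 - C u1 v2 - C u2 v1 \<ge> 0)"

definition Pi_cop :: "real \<Rightarrow> real \<Rightarrow> real" where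
  "Pi_cop u v = u * v"

text \<open>Partial derivative in the second argument; set to 0 where it does not exist
  (a Lebesgue null set for copulas, so irrelevant for all integrals below).\<close>
definition partial2 :: "(real \<Rightarrow> real \<Rightarrow> real) \<Rightarrow> real \<Rightarrow> real \<Rightarrow> real" where
  "partial2 C u t = (if (\<lambda>s. C u s) differentiable (at t) then deriv (\<lambda>s. C u s) t else 0)"

definition join :: "(real \<Rightarrow> real \<Rightarrow> real) \<Rightarrow> (real \<Rightarrow> real \<Rightarrow> real) \<Rightarrow> real \<Rightarrow> real \<Rightarrow> real" where
  "join D E u v = (LINT t|lebesgue_on {0..1}. min (partial2 D u t) (partial2 E v t))"

definition Top :: "(real \<Rightarrow> real \<Rightarrow> real) \<Rightarrow> real \<Rightarrow> real \<Rightarrow> real" where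
  "Top C = join C Pi_cop"

definition le_lo :: "(real \<Rightarrow> real \<Rightarrow> real) \<Rightarrow> (real \<Rightarrow> real \<Rightarrow> real) \<Rightarrow> bool" where
  "le_lo D E \<longleftrightarrow> (\<forall>u\<in>{0..1}. \<forall>v\<in>{0..1}. D u v \<le> E u v)"

text \<open>Decreasing rearrangement: some (a.e.-unique) decreasing function on (0,1)
  equimeasurable with f.\<close>
definition is_decr_rearr :: "(real \<Rightarrow> real) \<Rightarrow> (real \<Rightarrow> real) \<Rightarrow> bool" where
  "is_decr_rearr f g \<longleftrightarrow>
     (\<forall>s t. 0 < s \<longrightarrow> s \<le> t \<longrightarrow> t < 1 \<longrightarrow> g t \<le> g s) \<and>
     (\<forall>y. emeasure lebesgue {t\<in>{0<..<1}. g t \<le> y} = emeasure lebesgue {t\<in>{0<..<1}. f t \<le> y})"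

definition decr_rearr :: "(real \<Rightarrow> real) \<Rightarrow> real \<Rightarrow> real" where
  "decr_rearr f = (SOME g. is_decr_rearr f g)"

definition schur_le :: "(real \<Rightarrow> real) \<Rightarrow> (real \<Rightarrow> real) \<Rightarrow> bool" where
  "schur_le f g \<longleftrightarrow>
     (\<forall>v\<in>{0<..<1}. (LINT t|lebesgue_on {0..v}. decr_rearr f t) \<le> (LINT t|lebesgue_on {0..v}. decr_rearr g t)) \<and>
     (LINT t|lebesgue_on {0..1}. decr_rearr f t) = (LINT t|lebesgue_on {0..1}. decr_rearr g t)"

definition le_d2S :: "(real \<Rightarrow> real \<Rightarrow> real) \<Rightarrow> (real \<Rightarrow> real \<Rightarrow> real) \<Rightarrow> bool" where
  "le_d2S D E \<longleftrightarrow> (\<forall>v\<in>{0<..<1}. schur_le (partial2 D v) (partial2 E v))"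

end

theory Submission
  imports Defs "HOL-Probability.Probability"
begin

text \<open>
  Fix \<open>u\<close> and let \<open>f\<close>, \<open>g\<close> be the sections \<open>\<partial>\<^sub>2D(u,\<cdot>)\<close>, \<open>\<partial>\<^sub>2E(u,\<cdot>)\<close>: functions with values in
  \<open>[0,1]\<close> and integral \<open>u\<close>. Then \<open>\<T>(D)(u,v) = G\<^sub>f(v) = \<integral>\<^sub>0\<^sup>1 min (f t) v dt\<close>, and
  \<open>\<partial>\<^sub>2\<T>(D)(u,\<cdot>) = G\<^sub>f'\<close> is decreasing with \<open>\<integral>\<^sub>0\<^sup>s G\<^sub>f' = G\<^sub>f(s)\<close>.
  For a decreasing \<open>k\<close> the concave functions \<open>s \<mapsto> \<integral>\<^sub>0\<^sup>s k\<close> and \<open>G\<^sub>k\<close> are Legendre conjugate, so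
  \<open>\<integral>\<^sub>0\<^sup>s k\<^sub>1 \<le> \<integral>\<^sub>0\<^sup>s k\<^sub>2\<close> for all \<open>s\<close> iff \<open>G\<^sub>k\<^sub>2 \<le> G\<^sub>k\<^sub>1\<close>.
  Since the Schur order and \<open>G\<^sub>f\<close> only depend on the distribution of \<open>f\<close>, passing to decreasing
  rearrangements gives \<open>f \<prec>\<^sub>S g \<longleftrightarrow> G\<^sub>g \<le> G\<^sub>f\<close>, which is (i) \<open>\<longleftrightarrow>\<close> (ii); applying the duality to the
  decreasing derivatives \<open>G\<^sub>f'\<close>, \<open>G\<^sub>g'\<close> gives (ii) \<open>\<longleftrightarrow>\<close> (iv), and (iii), (v) are instances of
  (i) \<open>\<longleftrightarrow>\<close> (ii) for \<open>\<T>(D)\<close>, \<open>\<T>(E)\<close> and \<open>\<T>\<^sup>2(D)\<close>, \<open>\<T>\<^sup>2(E)\<close>.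
  The analytic input is Lebesgue's theorem that monotone Lipschitz functions are differentiable
  almost everywhere and integrate their derivatives, a consequence of the Vitali covering theorem.
\<close>

section \<open>Monotone 1-Lipschitz functions are differentiable almost everywhere\<close>

definition mono_lip1 :: "(real \<Rightarrow> real) \<Rightarrow> bool" where
  "mono_lip1 F \<longleftrightarrow> (\<forall>x y. x \<le> y \<longrightarrow> F x \<le> F y \<and> F y - F x \<le> y - x)"

lemma mono_lip1D:
  assumes "mono_lip1 F" "x \<le> y"
  shows "F x \<le> F y" "F y - F x \<le> y - x"
  using assms unfolding mono_lip1_def by auto

lemma mono_lip1_reflect: "mono_lip1 F \<Longrightarrow> mono_lip1 (\<lambda>x. x - F x)"
  unfolding mono_lip1_def by force

lemma mono_lip1_diff_quotient:
  assumes "mono_lip1 F" "h \<noteq> 0"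
  shows "0 \<le> (F (x + h) - F x) / h" "(F (x + h) - F x) / h \<le> 1"
proof -
  have "0 \<le> (F (x + h) - F x) / h \<and> (F (x + h) - F x) / h \<le> 1"
  proof (cases "h > 0")
    case True
    then show ?thesis using mono_lip1D[OF assms(1), of x "x + h"] by (auto simp: divide_simps)
  next
    case False
    then have "h < 0" using assms(2) by auto
    then show ?thesis using mono_lip1D[OF assms(1), of "x + h" x] by (auto simp: divide_simps)
  qed
  then show "0 \<le> (F (x + h) - F x) / h" "(F (x + h) - F x) / h \<le> 1" by auto
qed

lemma mono_lip1_continuous: "mono_lip1 F \<Longrightarrow> continuous_on UNIV F"
proof (rule lipschitz_on_continuous_on)
  assume F: "mono_lip1 F"
  show "1-lipschitz_on UNIV F"
  proof (rule lipschitz_onI)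
    fix x y :: real
    show "dist (F x) (F y) \<le> 1 * dist x y"
      using mono_lip1D[OF F, of x y] mono_lip1D[OF F, of y x] by (cases "x \<le> y") (auto simp: dist_real_def)
  qed simp
qed

definition slope_below :: "(real \<Rightarrow> real) \<Rightarrow> real \<Rightarrow> real \<Rightarrow> bool" where
  "slope_below F p x \<longleftrightarrow> (\<forall>d>0. \<exists>a b. a < x \<and> x < b \<and> b - a < d \<and> F b - F a < p * (b - a))"

definition slope_above :: "(real \<Rightarrow> real) \<Rightarrow> real \<Rightarrow> real \<Rightarrow> bool" where
  "slope_above F q x \<longleftrightarrow> (\<forall>d>0. \<exists>a b. a < x \<and> x < b \<and> b - a < d \<and> F b - F a > q * (b - a))"

lemma slope_above_iff_reflect: "slope_above F q x \<longleftrightarrow> slope_below (\<lambda>y. y - F y) (1 - q) x"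
  unfolding slope_above_def slope_below_def by (simp add: algebra_simps)

lemma sets_borel_slope_below: "{x. slope_below F p x} \<in> sets borel"
proof -
  define U where
    "U n = {x. \<exists>a b. a < x \<and> x < b \<and> b - a < inverse (real (Suc n)) \<and> F b - F a < p * (b - a)}" for n
  have "U n = (\<Union>(a, b)\<in>{(a, b). b - a < inverse (real (Suc n)) \<and> F b - F a < p * (b - a)}. {a<..<b})" for n
    unfolding U_def by fastforce
  then have "open (U n)" for n by auto
  moreover have "{x. slope_below F p x} = (\<Inter>n. U n)"
  proof safe
    fix x n assume "slope_below F p x" then show "x \<in> U n" unfolding slope_below_def U_def by auto
  next
    fix x assume x: "x \<in> (\<Inter>n. U n)"
    show "slope_below F p x" unfolding slope_below_def
    proof (intro allI impI)
      fix d :: real assume "d > 0"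
      then obtain n where n: "inverse (real (Suc n)) < d" using reals_Archimedean by blast
      from x obtain a b where "a < x" "x < b" "b - a < inverse (real (Suc n))" "F b - F a < p * (b - a)"
        unfolding U_def by blast
      with n show "\<exists>a b. a < x \<and> x < b \<and> b - a < d \<and> F b - F a < p * (b - a)" by force
    qed
  qed
  ultimately show ?thesis by auto
qed

lemma sets_borel_slope_above: "{x. slope_above F q x} \<in> sets borel"
  unfolding slope_above_iff_reflect by (rule sets_borel_slope_below)

lemma mono_lip1_slope_below_widen:
  assumes F: "mono_lip1 F" and ab: "a \<le> b" and slope: "F b - F a < p * (b - a)" and e: "e > 0"
  obtains a' b' where "a' < a" "b < b'" "b' - a' < b - a + e" "F b' - F a' < p * (b' - a')"
proof -
  define gap where "gap = p * (b - a) - (F b - F a)"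
  have gap: "gap > 0" using slope by (simp add: gap_def)
  have "0 < p * (b - a)" using mono_lip1D(1)[OF F ab] slope by linarith
  then have p: "p > 0" using ab by (simp add: zero_less_mult_iff)
  define \<delta> where "\<delta> = min (e / 4) (gap / 4)"
  have \<delta>: "\<delta> > 0" "4 * \<delta> \<le> e" "4 * \<delta> \<le> gap" using e gap by (auto simp: \<delta>_def)
  have "0 < p * \<delta>" using p \<delta>(1) by simp
  then have "F b - F a + 2 * \<delta> < p * ((b + \<delta>) - (a - \<delta>))"
    using \<delta>(1,3) by (simp add: gap_def algebra_simps)
  moreover have "F (b + \<delta>) - F (a - \<delta>) \<le> F b - F a + 2 * \<delta>"
    using mono_lip1D(2)[OF F, of b "b + \<delta>"] mono_lip1D(2)[OF F, of "a - \<delta>" a] \<delta> by auto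
  ultimately show ?thesis using \<delta> by (intro that[of "a - \<delta>" "b + \<delta>"]) auto
qed

lemma slope_below_if_frequently:
  assumes F: "mono_lip1 F" and fr: "\<exists>\<^sub>F h in at 0. (F (x + h) - F x) / h < p"
  shows "slope_below F p x"
  unfolding slope_below_def
proof (intro allI impI)
  fix d :: real assume d: "d > 0"
  have "\<not> (\<forall>h. h \<noteq> 0 \<and> dist h 0 < d / 2 \<longrightarrow> \<not> (F (x + h) - F x) / h < p)"
    using fr d unfolding frequently_def eventually_at by (metis half_gt_zero)
  then obtain h where h: "h \<noteq> 0" "\<bar>h\<bar> < d / 2" "(F (x + h) - F x) / h < p" by auto
  define a where "a = min x (x + h)"
  define b where "b = max x (x + h)"
  have ab: "a \<le> x" "x \<le> b" "b - a = \<bar>h\<bar>" by (auto simp: a_def b_def)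
  have "F b - F a < p * (b - a)"
  proof (cases "h > 0")
    case True
    then show ?thesis using h(3) by (simp add: a_def b_def pos_divide_less_eq)
  next
    case False
    then have "h < 0" using h(1) by simp
    then show ?thesis using h(3) by (simp add: a_def b_def neg_divide_less_eq algebra_simps)
  qed
  then obtain a' b' where "a' < a" "b < b'" "b' - a' < b - a + d / 2" "F b' - F a' < p * (b' - a')"
    using mono_lip1_slope_below_widen[OF F, of a b p "d / 2"] ab d by auto
  then show "\<exists>a b. a < x \<and> x < b \<and> b - a < d \<and> F b - F a < p * (b - a)"
    using ab h(2) by (intro exI[of _ a'] exI[of _ b']) auto
qed

lemma slope_above_if_frequently:
  assumes F: "mono_lip1 F" and fr: "\<exists>\<^sub>F h in at 0. (F (x + h) - F x) / h > q"
  shows "slope_above F q x"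
  unfolding slope_above_iff_reflect
proof (rule slope_below_if_frequently[OF mono_lip1_reflect[OF F]])
  have "((x + h - F (x + h)) - (x - F x)) / h = 1 - (F (x + h) - F x) / h" if "h \<noteq> 0" for h
    using that by (simp add: field_simps)
  moreover have "\<forall>\<^sub>F h in at (0::real). h \<noteq> 0" by (simp add: eventually_at_filter)
  ultimately show "\<exists>\<^sub>F h in at 0. ((x + h - F (x + h)) - (x - F x)) / h < 1 - q"
    by (intro frequently_mp[OF _ fr]) (auto elim: eventually_mono)
qed

lemma not_differentiable_imp_slopes:
  assumes F: "mono_lip1 F" and nd: "\<not> F differentiable (at x)"
  obtains p q where "p \<in> \<rat>" "q \<in> \<rat>" "0 < p" "p < q" "slope_below F p x" "slope_above F q x"
proof -
  define Q where "Q h = (F (x + h) - F x) / h" for h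
  have Q01: "\<forall>\<^sub>F h in at 0. 0 \<le> Q h \<and> Q h \<le> 1"
    unfolding eventually_at using mono_lip1_diff_quotient[OF F] Q_def by (auto intro!: exI[of _ 1])
  define L where "L = Liminf (at (0::real)) (\<lambda>h. ereal (Q h))"
  define U where "U = Limsup (at (0::real)) (\<lambda>h. ereal (Q h))"
  have LU: "L \<le> U" unfolding L_def U_def by (rule Liminf_le_Limsup) simp
  have L0: "0 \<le> L" unfolding L_def le_Liminf_iff
    using Q01 by (auto elim!: eventually_mono intro: less_le_trans[of _ 0])
  have U1: "U \<le> 1" unfolding U_def Limsup_le_iff
    using Q01 by (auto elim!: eventually_mono simp: one_ereal_def intro: le_less_trans[of _ "ereal 1"])
  obtain l u where l: "L = ereal l" and u: "U = ereal u"
    using L0 LU U1 by (cases L; cases U) auto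
  have "L \<noteq> U"
  proof
    assume "L = U"
    then have "((\<lambda>h. ereal (Q h)) \<longlongrightarrow> L) (at 0)"
      unfolding L_def U_def by (intro Liminf_eq_Limsup) auto
    then have "(F has_field_derivative l) (at x)" unfolding DERIV_def Q_def l by simp
    with nd show False using real_differentiable_def by blast
  qed
  then have lu: "0 \<le> l" "l < u" using LU L0 l u by auto
  obtain p where p: "p \<in> \<rat>" "l < p" "p < (l + u) / 2" using Rats_dense_in_real[of l "(l + u) / 2"] lu by auto
  obtain q where q: "q \<in> \<rat>" "(l + u) / 2 < q" "q < u" using Rats_dense_in_real[of "(l + u) / 2" u] lu by auto
  have "\<not> ereal p \<le> L" using p l by simp
  then obtain y where y: "y < ereal p" "\<not> (\<forall>\<^sub>F h in at 0. y < ereal (Q h))"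
    unfolding L_def le_Liminf_iff by auto
  have "\<exists>\<^sub>F h in at 0. Q h < p"
    using y(2) unfolding not_eventually
    by (rule frequently_elim1) (use y(1) in \<open>auto simp: not_less dest: le_less_trans\<close>)
  then have below: "slope_below F p x" by (intro slope_below_if_frequently[OF F]) (simp add: Q_def)
  have "\<not> U \<le> ereal q" using q u by simp
  then obtain y where y: "y > ereal q" "\<not> (\<forall>\<^sub>F h in at 0. ereal (Q h) < y)"
    unfolding U_def Limsup_le_iff by auto
  have "\<exists>\<^sub>F h in at 0. Q h > q"
    using y(2) unfolding not_eventually
    by (rule frequently_elim1) (use y(1) in \<open>auto simp: not_less dest: less_le_trans\<close>)
  then have above: "slope_above F q x" by (intro slope_above_if_frequently[OF F]) (simp add: Q_def)
  show ?thesis using p q lu below above by (intro that[of p q]) auto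
qed

lemma Vitali_covering_intervals:
  fixes S W :: "real set"
  assumes W: "open W" "S \<subseteq> W"
    and fine: "\<And>x d. x \<in> S \<Longrightarrow> d > 0 \<Longrightarrow> \<exists>a b. a < x \<and> x < b \<and> b - a < d \<and> P a b"
  obtains C where "countable C" "C \<subseteq> {(a, b). a < b \<and> {a..b} \<subseteq> W \<and> P a b}"
    "disjoint_family_on (\<lambda>i. {fst i<..<snd i}) C"
    "negligible (S - (\<Union>i\<in>C. {fst i<..<snd i}))"
proof -
  define K where "K = {(a, b). a < b \<and> {a..b} \<subseteq> W \<and> P a b}"
  define c where "c i = (fst i + snd i) / 2" for i :: "real \<times> real"
  define r where "r i = (snd i - fst i) / 2" for i :: "real \<times> real"
  have ball_eq: "ball (c i) (r i) = {fst i<..<snd i}" for i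
  proof -
    have "c i - r i = fst i" "c i + r i = snd i" unfolding c_def r_def by (simp_all add: field_simps)
    then show ?thesis by (simp add: ball_eq_greaterThanLessThan)
  qed
  have "\<exists>i. i \<in> K \<and> x \<in> ball (c i) (r i) \<and> r i < d" if x: "x \<in> S" and d: "0 < d" for x d
  proof -
    obtain e where e: "e > 0" "ball x e \<subseteq> W" using W x open_contains_ball by blast
    obtain a b where ab: "a < x" "x < b" "b - a < min d e" "P a b"
      using fine[OF x] d e(1) by (metis min_less_iff_conj)
    have "{a..b} \<subseteq> ball x e" using ab by (auto simp: dist_real_def)
    then have "(a, b) \<in> K" using ab e unfolding K_def by auto
    moreover have "x \<in> ball (c (a, b)) (r (a, b))" unfolding ball_eq using ab by simp
    moreover have "r (a, b) < d" using ab unfolding r_def by simp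
    ultimately show ?thesis by blast
  qed
  then obtain C where C: "countable C" "C \<subseteq> K"
     "pairwise (\<lambda>i j. disjnt (ball (c i) (r i)) (ball (c j) (r j))) C"
     "negligible (S - (\<Union>i\<in>C. ball (c i) (r i)))"
    by (rule Vitali_covering_theorem_balls[of S K c r])
  show ?thesis
  proof (rule that[of C])
    show "disjoint_family_on (\<lambda>i. {fst i<..<snd i}) C"
      using C(3) unfolding disjoint_family_on_def pairwise_def disjnt_def ball_eq by auto
  qed (use C K_def ball_eq in auto)
qed

lemma emeasure_lebesgue_Ioo: "a \<le> b \<Longrightarrow> emeasure lebesgue {a<..<b} = ennreal (b - a)"
  by (simp add: emeasure_completion)

lemma emeasure_interval_measure_Ioo:
  assumes F: "mono_lip1 F" and ab: "a \<le> b"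
  shows "emeasure (interval_measure F) {a<..<b} = ennreal (F b - F a)"
proof -
  let ?M = "interval_measure F"
  have cont: "continuous_on UNIV F" by (rule mono_lip1_continuous[OF F])
  have mono: "x \<le> y \<Longrightarrow> F x \<le> F y" for x y using mono_lip1D(1)[OF F] .
  have "emeasure ?M {b..b} = ennreal (F b - F b)"
    by (rule emeasure_interval_measure_Icc) (auto intro: mono cont)
  then have b: "emeasure ?M {b} = 0" by simp
  have "emeasure ?M {a<..b} = ennreal (F b - F a)"
    by (rule emeasure_interval_measure_Ioc)
       (auto intro: mono ab cont continuous_on_imp_continuous_within[OF _ subset_UNIV])
  moreover have "emeasure ?M {a<..b} = emeasure ?M {a<..<b} + emeasure ?M {b}" if "a < b"
    using that by (subst plus_emeasure) (auto intro: arg_cong[where f="emeasure ?M"])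
  ultimately show ?thesis using ab b by (cases "a = b") auto
qed

lemma emeasure_UN_Ioo:
  fixes M :: "real measure"
  assumes "\<And>a b. a \<le> b \<Longrightarrow> emeasure M {a<..<b} = ennreal (F b - F a)"
    and sets: "\<And>a b. {a<..<b} \<in> sets M"
    and C: "countable C" "disjoint_family_on (\<lambda>i. {fst i<..<snd i}) C" "\<And>i. i \<in> C \<Longrightarrow> fst i < snd i"
  shows "emeasure M (\<Union>i\<in>C. {fst i<..<snd i}) = (\<integral>\<^sup>+ i. ennreal (F (snd i) - F (fst i)) \<partial>count_space C)"
proof -
  have "emeasure M (\<Union>i\<in>C. {fst i<..<snd i}) = (\<integral>\<^sup>+ i. emeasure M {fst i<..<snd i} \<partial>count_space C)"
    by (rule emeasure_UN_countable) (use sets C in auto)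
  also have "\<dots> = (\<integral>\<^sup>+ i. ennreal (F (snd i) - F (fst i)) \<partial>count_space C)"
    using assms(1) C(3) by (intro nn_integral_cong) (simp add: less_imp_le)
  finally show ?thesis .
qed

lemma slope_below_open_cover:
  assumes F: "mono_lip1 F" and p: "0 \<le> p" and W: "open W" "S \<subseteq> W"
    and S: "S \<subseteq> {x. slope_below F p x}"
  obtains V where "open V" "V \<subseteq> W" "negligible (S - V)"
    "emeasure (interval_measure F) V \<le> ennreal p * emeasure lebesgue V"
proof -
  obtain C where C: "countable C" "C \<subseteq> {(a, b). a < b \<and> {a..b} \<subseteq> W \<and> F b - F a < p * (b - a)}"
    "disjoint_family_on (\<lambda>i. {fst i<..<snd i}) C" "negligible (S - (\<Union>i\<in>C. {fst i<..<snd i}))"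
    by (rule Vitali_covering_intervals[OF W, where P="\<lambda>a b. F b - F a < p * (b - a)"])
       (use S in \<open>auto simp: slope_below_def\<close>)
  define V where "V = (\<Union>i\<in>C. {fst i<..<snd i})"
  have "V \<subseteq> W" unfolding V_def using C(2) by force
  have lt: "fst i < snd i" if "i \<in> C" for i using C(2) that by auto
  have "emeasure (interval_measure F) V = (\<integral>\<^sup>+ i. ennreal (F (snd i) - F (fst i)) \<partial>count_space C)"
    unfolding V_def by (rule emeasure_UN_Ioo[OF emeasure_interval_measure_Ioo[OF F] _ C(1,3) lt]) auto
  also have "\<dots> \<le> (\<integral>\<^sup>+ i. ennreal p * ennreal (snd i - fst i) \<partial>count_space C)"
    using C(2) p by (intro nn_integral_mono) (auto simp flip: ennreal_mult intro!: ennreal_leI)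
  also have "\<dots> = ennreal p * emeasure lebesgue V"
    unfolding V_def by (simp add: nn_integral_cmult emeasure_UN_Ioo[OF emeasure_lebesgue_Ioo _ C(1,3) lt])
  finally show ?thesis using C(4) \<open>V \<subseteq> W\<close> by (intro that[of V]) (auto simp: V_def)
qed

lemma slope_above_open_cover:
  assumes F: "mono_lip1 F" and q: "0 \<le> q" and W: "open W" "S \<subseteq> W"
    and S: "S \<subseteq> {x. slope_above F q x}"
  obtains V where "open V" "V \<subseteq> W" "negligible (S - V)"
    "ennreal q * emeasure lebesgue V \<le> emeasure (interval_measure F) V"
proof -
  obtain C where C: "countable C" "C \<subseteq> {(a, b). a < b \<and> {a..b} \<subseteq> W \<and> F b - F a > q * (b - a)}"
    "disjoint_family_on (\<lambda>i. {fst i<..<snd i}) C" "negligible (S - (\<Union>i\<in>C. {fst i<..<snd i}))"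
    by (rule Vitali_covering_intervals[OF W, where P="\<lambda>a b. F b - F a > q * (b - a)"])
       (use S in \<open>auto simp: slope_above_def\<close>)
  define V where "V = (\<Union>i\<in>C. {fst i<..<snd i})"
  have "V \<subseteq> W" unfolding V_def using C(2) by force
  have lt: "fst i < snd i" if "i \<in> C" for i using C(2) that by auto
  have "ennreal q * emeasure lebesgue V = (\<integral>\<^sup>+ i. ennreal q * ennreal (snd i - fst i) \<partial>count_space C)"
    unfolding V_def by (simp add: nn_integral_cmult emeasure_UN_Ioo[OF emeasure_lebesgue_Ioo _ C(1,3) lt])
  also have "\<dots> \<le> (\<integral>\<^sup>+ i. ennreal (F (snd i) - F (fst i)) \<partial>count_space C)"
  proof (rule nn_integral_mono)
    fix i assume "i \<in> space (count_space C)"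
    then have "q * (snd i - fst i) \<le> F (snd i) - F (fst i)" "0 \<le> snd i - fst i" using C(2) by auto
    then show "ennreal q * ennreal (snd i - fst i) \<le> ennreal (F (snd i) - F (fst i))"
      using q by (simp add: ennreal_leI flip: ennreal_mult)
  qed
  also have "\<dots> = emeasure (interval_measure F) V"
    unfolding V_def by (rule emeasure_UN_Ioo[OF emeasure_interval_measure_Ioo[OF F] _ C(1,3) lt, symmetric]) auto
  finally show ?thesis using C(4) \<open>V \<subseteq> W\<close> by (intro that[of V]) (auto simp: V_def)
qed

text \<open>Vitali covers give an open \<open>V\<close> containing almost all of \<open>S\<close> with \<open>\<mu>\<^sub>F(V) \<le> p \<lambda>(V)\<close>, and inside it
  an open \<open>V'\<close> containing almost all of \<open>S\<close> with \<open>q \<lambda>(V') \<le> \<mu>\<^sub>F(V')\<close>.\<close>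
lemma emeasure_slope_below_above_le:
  assumes F: "mono_lip1 F" and pq: "0 < p" "p < q"
    and S: "S \<in> sets lebesgue" "S \<subseteq> {x. slope_below F p x \<and> slope_above F q x}" and e: "e > 0"
  shows "ennreal q * emeasure lebesgue S \<le> ennreal p * (emeasure lebesgue S + ennreal e)"
proof -
  let ?\<mu> = "interval_measure F"
  obtain U where U: "open U" "S \<subseteq> U" "U - S \<in> lmeasurable" "emeasure lebesgue (U - S) < ennreal e"
    using sets_lebesgue_outer_open[OF S(1) e] by blast
  have "emeasure lebesgue U \<le> emeasure lebesgue S + emeasure lebesgue (U - S)"
    using emeasure_subadditive[of S lebesgue "U - S"] U(2,3) S(1) by (simp add: Un_absorb1 fmeasurableD)
  then have U_le: "emeasure lebesgue U \<le> emeasure lebesgue S + ennreal e"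
    using U(4) by (meson add_left_mono less_imp_le order_trans)
  obtain V where V: "open V" "V \<subseteq> U" "negligible (S - V)" "emeasure ?\<mu> V \<le> ennreal p * emeasure lebesgue V"
    by (rule slope_below_open_cover[OF F less_imp_le[OF pq(1)] U(1,2)]) (use S(2) in auto)
  obtain V' where V': "open V'" "V' \<subseteq> V" "negligible (S \<inter> V - V')"
    "ennreal q * emeasure lebesgue V' \<le> emeasure ?\<mu> V'"
    by (rule slope_above_open_cover[OF F _ V(1), where q=q and S="S \<inter> V"]) (use pq S(2) in auto)
  have "negligible (S - V')" using negligible_Un[OF V(3) V'(3)] by (rule negligible_subset) auto
  then have "emeasure lebesgue (S - V') = 0"
    using S(1) V'(1) by (simp add: negligible_iff_emeasure0 sets.Diff)
  moreover have "V' \<in> sets lebesgue" using V'(1) by simp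
  ultimately have "emeasure lebesgue S \<le> emeasure lebesgue V'"
    using S(1) emeasure_subadditive[of V' lebesgue "S - V'"] emeasure_mono[of S "V' \<union> (S - V')" lebesgue]
    by auto
  then have "ennreal q * emeasure lebesgue S \<le> ennreal q * emeasure lebesgue V'" by (rule mult_left_mono) simp
  also have "\<dots> \<le> emeasure ?\<mu> V'" by (rule V'(4))
  also have "\<dots> \<le> emeasure ?\<mu> V" using V'(2) V(1) by (intro emeasure_mono) auto
  also have "\<dots> \<le> ennreal p * emeasure lebesgue V" by (rule V(4))
  also have "\<dots> \<le> ennreal p * emeasure lebesgue U"
    using V(2) U(1) by (intro mult_left_mono emeasure_mono) auto
  also have "\<dots> \<le> ennreal p * (emeasure lebesgue S + ennreal e)" using U_le by (rule mult_left_mono) simp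
  finally show ?thesis .
qed

lemma negligible_slope_below_above:
  assumes F: "mono_lip1 F" and pq: "0 < p" "p < q"
  shows "negligible {x. slope_below F p x \<and> slope_above F q x}"
proof (subst negligible_on_intervals, intro allI)
  fix a b :: real
  define S where "S = {x. slope_below F p x \<and> slope_above F q x} \<inter> cbox a b"
  have "{x. slope_below F p x \<and> slope_above F q x} \<in> sets borel"
    using sets_borel_slope_below[of F p] sets_borel_slope_above[of F q] by (simp add: Collect_conj_eq)
  then have S: "S \<in> lmeasurable"
    unfolding S_def by (intro fmeasurableI2[OF lmeasurable_cbox]) (auto intro: sets_completionI_sets)
  define r where "r = measure lebesgue S"
  have r: "emeasure lebesgue S = ennreal r" "0 \<le> r"
    using S by (simp_all add: r_def emeasure_eq_measure2)
  have "q * r \<le> p * r + e" if e: "e > 0" for e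
  proof -
    have "ennreal q * emeasure lebesgue S \<le> ennreal p * (emeasure lebesgue S + ennreal (e / p))"
      using S e pq by (intro emeasure_slope_below_above_le[OF F pq]) (auto simp: S_def)
    then have "ennreal (q * r) \<le> ennreal (p * (r + e / p))"
      using r pq e by (simp add: ennreal_mult flip: ennreal_plus del: ennreal_plus)
    moreover have "0 \<le> p * (r + e / p)" using r pq e by simp
    ultimately have "q * r \<le> p * (r + e / p)" by (simp only: ennreal_le_iff)
    then show ?thesis using pq by (simp add: distrib_left)
  qed
  then have "(q - p) * r \<le> 0" by (simp add: field_le_epsilon left_diff_distrib)
  then have "r = 0" using pq r(2) by (simp add: mult_le_0_iff)
  then show "negligible S" using S by (simp add: negligible_iff_emeasure0 fmeasurableD r)
qed

theorem mono_lip1_differentiable_ae: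
  assumes F: "mono_lip1 F"
  shows "negligible {x. \<not> F differentiable (at x)}"
proof -
  define P :: "(real \<times> real) set" where "P = {(p, q). p \<in> \<rat> \<and> q \<in> \<rat> \<and> 0 < p \<and> p < q}"
  have "negligible (\<Union>(p, q)\<in>P. {x. slope_below F p x \<and> slope_above F q x})"
  proof (rule negligible_countable_Union)
    have "P \<subseteq> \<rat> \<times> \<rat>" by (auto simp: P_def)
    then show "countable ((\<lambda>(p, q). {x. slope_below F p x \<and> slope_above F q x}) ` P)"
      by (intro countable_image countable_subset[OF _ countable_SIGMA[OF countable_rat countable_rat]])
  qed (auto simp: P_def intro: negligible_slope_below_above[OF F])
  moreover have "{x. \<not> F differentiable (at x)} \<subseteq> (\<Union>(p, q)\<in>P. {x. slope_below F p x \<and> slope_above F q x})"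
    using not_differentiable_imp_slopes[OF F] unfolding P_def by blast
  ultimately show ?thesis by (rule negligible_subset)
qed

section \<open>Integrating the derivative of a monotone 1-Lipschitz function\<close>

definition deriv0 :: "(real \<Rightarrow> real) \<Rightarrow> real \<Rightarrow> real" where
  "deriv0 F t = (if F differentiable (at t) then deriv F t else 0)"

lemma partial2_eq_deriv0: "partial2 C u = deriv0 (C u)"
  by (simp add: partial2_def deriv0_def fun_eq_iff)

lemma deriv0_cong_open:
  assumes S: "open S" "t \<in> S" and eq: "\<And>x. x \<in> S \<Longrightarrow> f x = g x"
  shows "deriv0 f t = deriv0 g t"
proof -
  have D: "(f has_real_derivative D) (at t) \<longleftrightarrow> (g has_real_derivative D) (at t)" for D
    by (intro DERIV_cong_ev) (use S eq in \<open>auto simp: eventually_nhds intro!: exI[of _ S]\<close>)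
  then have "f differentiable (at t) \<longleftrightarrow> g differentiable (at t)"
    unfolding real_differentiable_def by blast
  moreover have "deriv f t = deriv g t" if "f differentiable (at t)"
    using that D[of "deriv f t"] by (simp add: DERIV_deriv_iff_real_differentiable DERIV_imp_deriv)
  ultimately show ?thesis by (simp add: deriv0_def)
qed

lemma has_real_derivative_LIMSEQ:
  assumes "(F has_real_derivative D) (at x)" and "h \<longlonglongrightarrow> 0" and "\<And>n. h n \<noteq> 0"
  shows "(\<lambda>n. (F (x + h n) - F x) / h n) \<longlonglongrightarrow> D"
proof -
  have "((\<lambda>h. (F (x + h) - F x) / h) \<longlongrightarrow> D) (at 0)" using assms(1) by (simp add: DERIV_def)
  moreover have "filterlim h (at 0) sequentially" using assms(2,3) by (simp add: filterlim_at)
  ultimately show ?thesis by (rule filterlim_compose)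
qed

lemma inverse_Suc_tendsto_0:
  "(\<lambda>n. inverse (real (Suc n))) \<longlonglongrightarrow> 0" "inverse (real (Suc n)) \<noteq> 0"
  "(\<lambda>n. - inverse (real (Suc n))) \<longlonglongrightarrow> 0" "- inverse (real (Suc n)) \<noteq> 0"
  using LIMSEQ_inverse_real_of_nat tendsto_minus[OF LIMSEQ_inverse_real_of_nat] by auto

lemma deriv0_mono_lip1:
  assumes F: "mono_lip1 F" shows "0 \<le> deriv0 F t" "deriv0 F t \<le> 1"
proof -
  have "0 \<le> deriv F t \<and> deriv F t \<le> 1" if "F differentiable (at t)"
  proof -
    have "((\<lambda>h. (F (t + h) - F t) / h) \<longlongrightarrow> deriv F t) (at 0)"
      using that by (simp add: DERIV_def flip: DERIV_deriv_iff_real_differentiable)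
    moreover have "\<forall>\<^sub>F h in at 0. 0 \<le> (F (t + h) - F t) / h \<and> (F (t + h) - F t) / h \<le> 1"
      unfolding eventually_at using mono_lip1_diff_quotient[OF F] by (auto intro!: exI[of _ 1])
    ultimately show ?thesis
      by (auto intro: tendsto_lowerbound tendsto_upperbound elim: eventually_mono)
  qed
  then show "0 \<le> deriv0 F t" "deriv0 F t \<le> 1" by (auto simp: deriv0_def)
qed

lemma average_integral_LIMSEQ:
  fixes F :: "real \<Rightarrow> real"
  assumes F: "continuous_on UNIV F"
  shows "(\<lambda>n. integral {x..x + inverse (real (Suc n))} F / inverse (real (Suc n))) \<longlonglongrightarrow> F x"
proof -
  define \<Phi> where "\<Phi> y = integral {x - 1..y} F" for y
  have "(\<Phi> has_real_derivative F x) (at x within {x - 1..x + 1})"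
    unfolding \<Phi>_def by (rule integral_has_real_derivative) (auto intro: continuous_on_subset[OF F])
  then have "(\<Phi> has_real_derivative F x) (at x)" by (simp add: at_within_Icc_at)
  from has_real_derivative_LIMSEQ[OF this inverse_Suc_tendsto_0(1,2)]
  have "(\<lambda>n. (\<Phi> (x + inverse (real (Suc n))) - \<Phi> x) / inverse (real (Suc n))) \<longlonglongrightarrow> F x" .
  moreover have "\<Phi> (x + h) - \<Phi> x = integral {x..x + h} F" if "h \<ge> 0" for h
    using Henstock_Kurzweil_Integration.integral_combine[where a="x - 1" and c=x and b="x + h" and f=F] that
    by (simp add: \<Phi>_def integrable_continuous_interval continuous_on_subset[OF F])
  ultimately show ?thesis by simp
qed

lemma integral_diff_quotient:
  fixes F :: "real \<Rightarrow> real"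
  assumes F: "continuous_on UNIV F" and ab: "a \<le> b" and h: "h > 0"
  shows "integral {a..b} (\<lambda>t. (F (t + h) - F t) / h) = integral {b..b + h} F / h - integral {a..a + h} F / h"
proof -
  have int: "F integrable_on {x..y}" for x y
    by (rule integrable_continuous_interval[OF continuous_on_subset[OF F subset_UNIV]])
  have "integral {a..b} (\<lambda>t. F (t + h)) = integral {a + h..b + h} F"
    using integral_shift_Icc_real[of a b F h] by (simp add: o_def add.commute)
  moreover have "integral {a..b + h} F = integral {a..a + h} F + integral {a + h..b + h} F"
    using ab h by (intro Henstock_Kurzweil_Integration.integral_combine[symmetric] int) auto
  moreover have "integral {a..b + h} F = integral {a..b} F + integral {b..b + h} F"
    using ab h by (intro Henstock_Kurzweil_Integration.integral_combine[symmetric] int) auto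
  moreover have "(\<lambda>t. F (t + h)) integrable_on {a..b}"
    by (intro integrable_continuous_interval continuous_on_compose2[OF F]) (auto intro: continuous_intros)
  ultimately show ?thesis
    by (simp add: integral_diff int integral_divide flip: diff_divide_distrib)
qed

theorem mono_lip1_has_integral_deriv0:
  assumes F: "mono_lip1 F" and ab: "a \<le> b"
  shows "(deriv0 F has_integral (F b - F a)) {a..b}"
proof -
  define h where "h n = inverse (real (Suc n))" for n
  have h: "h n > 0" for n by (simp add: h_def)
  have cont: "continuous_on UNIV F" by (rule mono_lip1_continuous[OF F])
  define N where "N = {x. \<not> F differentiable (at x)}"
  have N: "negligible N" unfolding N_def by (rule mono_lip1_differentiable_ae[OF F])
  define Q where "Q n t = (if t \<in> N then 0 else (F (t + h n) - F t) / h n)" for n t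
  have Q_integral: "integral {a..b} (Q n) = integral {b..b + h n} F / h n - integral {a..a + h n} F / h n"
    and Q_integrable: "Q n integrable_on {a..b}" for n
  proof -
    have "(\<lambda>t. (F (t + h n) - F t) / h n) integrable_on {a..b}"
      using h[of n] by (intro integrable_continuous_interval continuous_on_compose2[OF cont] continuous_intros) auto
    then show "Q n integrable_on {a..b}" by (rule integrable_spike[OF _ N]) (simp add: Q_def)
    have "integral {a..b} (Q n) = integral {a..b} (\<lambda>t. (F (t + h n) - F t) / h n)"
      by (rule integral_spike[OF N]) (simp add: Q_def)
    then show "integral {a..b} (Q n) = integral {b..b + h n} F / h n - integral {a..a + h n} F / h n"
      using integral_diff_quotient[OF cont ab h] by simp
  qed
  have "(\<lambda>n. integral {a..b} (Q n)) \<longlonglongrightarrow> F b - F a"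
    unfolding Q_integral h_def by (intro tendsto_diff average_integral_LIMSEQ[OF cont])
  moreover have "norm (Q n t) \<le> 1" for n t
    using mono_lip1_diff_quotient[OF F, of "h n" t] h[of n] by (auto simp: Q_def)
  moreover have "(\<lambda>n. Q n t) \<longlonglongrightarrow> deriv0 F t" for t
  proof (cases "t \<in> N")
    case False
    then have "(F has_real_derivative deriv F t) (at t)"
      by (simp add: N_def DERIV_deriv_iff_real_differentiable)
    from has_real_derivative_LIMSEQ[OF this inverse_Suc_tendsto_0(1,2)] show ?thesis
      using False by (simp add: Q_def deriv0_def N_def h_def)
  qed (simp add: Q_def deriv0_def N_def)
  ultimately have "deriv0 F integrable_on {a..b}" "(\<lambda>n. integral {a..b} (Q n)) \<longlonglongrightarrow> integral {a..b} (deriv0 F)"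
    using dominated_convergence[of Q "{a..b}" "\<lambda>_. 1" "deriv0 F"] Q_integrable by auto
  then show ?thesis using LIMSEQ_unique \<open>(\<lambda>n. integral {a..b} (Q n)) \<longlonglongrightarrow> F b - F a\<close>
    by (metis has_integral_integrable_integral)
qed

section \<open>Capped integrals and their Legendre duality\<close>

text \<open>Values at \<open>0\<close> and \<open>1\<close> are unconstrained: a copula says nothing about \<open>C u s\<close> for \<open>s \<notin> [0,1]\<close>,
  so \<open>partial2 C u\<close> is arbitrary at the endpoints.\<close>
definition unit_valued :: "(real \<Rightarrow> real) \<Rightarrow> bool" where
  "unit_valued k \<longleftrightarrow> k integrable_on {0..1} \<and> (\<forall>t\<in>{0<..<1}. 0 \<le> k t \<and> k t \<le> 1)"

lemma unit_valuedD:
  assumes "unit_valued k"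
  shows "k integrable_on {0..1}" "t \<in> {0<..<1} \<Longrightarrow> 0 \<le> k t" "t \<in> {0<..<1} \<Longrightarrow> k t \<le> 1"
  using assms unfolding unit_valued_def by auto

lemma unit_valued_integrable_on:
  assumes "unit_valued k" "0 \<le> a" "b \<le> 1"
  shows "k integrable_on {a..b}"
  using assms unfolding unit_valued_def by (auto intro: integrable_on_subinterval)

lemma bounded_measurable_integrable_on:
  fixes f :: "real \<Rightarrow> real"
  assumes "f \<in> borel_measurable (lebesgue_on {a..b})" and "\<And>x. x \<in> {a<..<b} \<Longrightarrow> \<bar>f x\<bar> \<le> C"
  shows "f integrable_on {a..b}"
proof -
  have "f \<in> borel_measurable (lebesgue_on {a<..<b})"
    by (rule measurable_restrict_mono[OF assms(1)]) auto
  then have "f integrable_on {a<..<b}"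
    by (rule measurable_bounded_by_integrable_imp_integrable[of _ _ "\<lambda>_. C"])
       (use assms(2) in \<open>auto simp: integrable_on_open_interval_real\<close>)
  then show ?thesis by (simp add: integrable_on_open_interval_real)
qed

lemma bounded_integrable_on_imp_lebesgue:
  fixes f :: "real \<Rightarrow> real"
  assumes f: "f integrable_on {a..b}" and bd: "\<And>x. x \<in> {a<..<b} \<Longrightarrow> \<bar>f x\<bar> \<le> C"
  shows "integrable (lebesgue_on {a..b}) f" "(LINT x|lebesgue_on {a..b}. f x) = integral {a..b} f"
proof -
  have "f absolutely_integrable_on {a<..<b}"
    using f bd by (intro absolutely_integrable_integrable_bound[where g="\<lambda>_. C"])
      (auto simp: integrable_on_open_interval_real)
  then have "f absolutely_integrable_on {a..b}"
    by (simp add: absolutely_integrable_on_def integrable_on_open_interval_real)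
  then show i: "integrable (lebesgue_on {a..b}) f"
    by (rule absolutely_integrable_imp_integrable) simp
  show "(LINT x|lebesgue_on {a..b}. f x) = integral {a..b} f"
    by (rule lebesgue_integral_eq_integral[OF i]) simp
qed

definition capped_integral :: "(real \<Rightarrow> real) \<Rightarrow> real \<Rightarrow> real" where
  "capped_integral k v = integral {0..1} (\<lambda>t. min (k t) v)"

lemma min_integrable_on:
  assumes k: "unit_valued k" and ab: "0 \<le> a" "b \<le> 1"
  shows "(\<lambda>t. min (k t) v) integrable_on {a..b}"
proof (rule bounded_measurable_integrable_on[where C="1 + \<bar>v\<bar>"])
  have "k \<in> borel_measurable (lebesgue_on {a..b})"
    by (rule integrable_imp_measurable[OF unit_valued_integrable_on[OF k ab]])
  then show "(\<lambda>t. min (k t) v) \<in> borel_measurable (lebesgue_on {a..b})"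
    by (intro borel_measurable_min) auto
  fix x assume "x \<in> {a<..<b}"
  then show "\<bar>min (k x) v\<bar> \<le> 1 + \<bar>v\<bar>" using unit_valuedD(2,3)[OF k, of x] ab by (auto simp: min_def)
qed

lemma capped_integral_eq_lebesgue:
  assumes k: "unit_valued k"
  shows "capped_integral k v = (LINT t|lebesgue_on {0..1}. min (k t) v)"
  unfolding capped_integral_def
proof (rule bounded_integrable_on_imp_lebesgue(2)[symmetric, where C="1 + \<bar>v\<bar>"])
  show "(\<lambda>t. min (k t) v) integrable_on {0..1}" by (rule min_integrable_on[OF k]) auto
  fix x :: real assume "x \<in> {0<..<1}"
  then show "\<bar>min (k x) v\<bar> \<le> 1 + \<bar>v\<bar>" using unit_valuedD(2,3)[OF k, of x] by (auto simp: min_def)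
qed

lemma mono_lip1_capped_integral:
  assumes k: "unit_valued k" shows "mono_lip1 (capped_integral k)"
  unfolding mono_lip1_def
proof (intro allI impI conjI)
  fix x y :: real assume xy: "x \<le> y"
  have ix: "(\<lambda>t. min (k t) x) integrable_on {0..1}" and iy: "(\<lambda>t. min (k t) y) integrable_on {0..1}"
    using min_integrable_on[OF k] by auto
  show "capped_integral k x \<le> capped_integral k y"
    unfolding capped_integral_def by (rule integral_le[OF ix iy]) (use xy in auto)
  have "capped_integral k y \<le> integral {0..1} (\<lambda>t. min (k t) x + (y - x))"
    unfolding capped_integral_def by (rule integral_le[OF iy integrable_add[OF ix]]) (use xy in auto)
  also have "\<dots> = capped_integral k x + integral {0..1} (\<lambda>t::real. y - x)"
    unfolding capped_integral_def by (rule Henstock_Kurzweil_Integration.integral_add[OF ix]) auto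
  also have "\<dots> = capped_integral k x + (y - x)" by simp
  finally show "capped_integral k y - capped_integral k x \<le> y - x" by simp
qed

lemma capped_integral_0:
  assumes "unit_valued k" shows "capped_integral k 0 = 0"
proof -
  have "capped_integral k 0 = integral {0..1} (\<lambda>_::real. 0::real)" unfolding capped_integral_def
    by (rule integral_spike[where S="{0, 1}"]) (use assms in \<open>auto simp: unit_valued_def\<close>)
  then show ?thesis by simp
qed

lemma capped_integral_1: "unit_valued k \<Longrightarrow> capped_integral k 1 = integral {0..1} k"
  unfolding capped_integral_def
  by (rule integral_spike[where S="{0, 1}"]) (auto simp: unit_valued_def)

text \<open>Concavity of \<open>capped_integral k\<close>: every increment of \<open>min c\<close> over \<open>[y - h, y]\<close> is at most the
  increment over \<open>[x, x + h]\<close> when \<open>x + h \<le> y - h\<close>.\<close>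
lemma deriv0_capped_integral_antimono:
  assumes k: "unit_valued k" and xy: "x < y"
    and dx: "capped_integral k differentiable (at x)" and dy: "capped_integral k differentiable (at y)"
  shows "deriv0 (capped_integral k) y \<le> deriv0 (capped_integral k) x"
proof -
  let ?G = "capped_integral k"
  define h where "h n = inverse (real (Suc n))" for n
  have "(\<lambda>n. (?G (x + h n) - ?G x) / h n) \<longlonglongrightarrow> deriv ?G x"
    unfolding h_def using dx
    by (intro has_real_derivative_LIMSEQ inverse_Suc_tendsto_0) (simp add: DERIV_deriv_iff_real_differentiable)
  moreover have "(\<lambda>n. (?G y - ?G (y - h n)) / h n) \<longlonglongrightarrow> deriv ?G y"
  proof -
    have "(\<lambda>n. (?G (y + - h n) - ?G y) / - h n) \<longlonglongrightarrow> deriv ?G y"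
      unfolding h_def using dy
      by (intro has_real_derivative_LIMSEQ inverse_Suc_tendsto_0) (simp add: DERIV_deriv_iff_real_differentiable)
    then show ?thesis by (simp add: minus_divide_left)
  qed
  moreover obtain N where N: "inverse (real (Suc N)) < (y - x) / 2"
    using reals_Archimedean xy by (metis half_gt_zero diff_gt_0_iff_gt)
  moreover have "(?G y - ?G (y - h n)) / h n \<le> (?G (x + h n) - ?G x) / h n" if "N \<le> n" for n
  proof -
    have "h n \<le> inverse (real (Suc N))" using that unfolding h_def by (auto simp: field_simps)
    then have hle: "x + h n \<le> y - h n" using N by simp
    have hp: "0 < h n" unfolding h_def by simp
    have "?G y - ?G (y - h n) = integral {0..1} (\<lambda>t. min (k t) y - min (k t) (y - h n))"
      unfolding capped_integral_def
      by (rule Henstock_Kurzweil_Integration.integral_diff[symmetric]) (auto intro: min_integrable_on[OF k])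
    also have "\<dots> \<le> integral {0..1} (\<lambda>t. min (k t) (x + h n) - min (k t) x)"
      using hle hp by (intro integral_le integrable_diff min_integrable_on[OF k]) (auto simp: min_def)
    also have "\<dots> = ?G (x + h n) - ?G x"
      unfolding capped_integral_def
      by (rule Henstock_Kurzweil_Integration.integral_diff) (auto intro: min_integrable_on[OF k])
    finally show ?thesis using hp by (simp add: divide_right_mono)
  qed
  ultimately have "deriv ?G y \<le> deriv ?G x" by (intro LIMSEQ_le) blast+
  then show ?thesis using dx dy by (simp add: deriv0_def)
qed

definition ae_decreasing :: "(real \<Rightarrow> real) \<Rightarrow> bool" where
  "ae_decreasing k \<longleftrightarrow> (\<exists>Z. negligible Z \<and> (\<forall>x\<in>{0<..<1} - Z. \<forall>y\<in>{0<..<1} - Z. x < y \<longrightarrow> k y \<le> k x))"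

definition capped_deriv :: "(real \<Rightarrow> real) \<Rightarrow> real \<Rightarrow> real" where
  "capped_deriv k = deriv0 (capped_integral k)"

lemma integral_capped_deriv:
  assumes k: "unit_valued k" and s: "0 \<le> s"
  shows "integral {0..s} (capped_deriv k) = capped_integral k s"
  using mono_lip1_has_integral_deriv0[OF mono_lip1_capped_integral[OF k] s] capped_integral_0[OF k]
  by (simp add: capped_deriv_def integral_unique)

lemma unit_valued_capped_deriv:
  assumes k: "unit_valued k" shows "unit_valued (capped_deriv k)"
  using mono_lip1_has_integral_deriv0[OF mono_lip1_capped_integral[OF k] zero_le_one]
    deriv0_mono_lip1[OF mono_lip1_capped_integral[OF k]]
  unfolding unit_valued_def capped_deriv_def by blast

lemma ae_decreasing_capped_deriv:
  assumes k: "unit_valued k" shows "ae_decreasing (capped_deriv k)"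
  using mono_lip1_differentiable_ae[OF mono_lip1_capped_integral[OF k]] deriv0_capped_integral_antimono[OF k]
  unfolding ae_decreasing_def capped_deriv_def by blast

text \<open>For decreasing \<open>k\<close> the concave functions \<open>s \<mapsto> \<integral>\<^sub>0\<^sup>s k\<close> and \<open>capped_integral k\<close> are
  Legendre conjugates: \<open>capped_integral k v = min\<^sub>s (\<integral>\<^sub>0\<^sup>1 k + s v - \<integral>\<^sub>0\<^sup>s k)\<close>, and conversely.
  The inequality holds for every \<open>k\<close>; equality is attained at a point where \<open>k\<close> crosses \<open>v\<close>.\<close>
lemma capped_integral_add_integral_le:
  assumes k: "unit_valued k" and s: "0 \<le> s" "s \<le> 1"
  shows "capped_integral k v + integral {0..s} k \<le> integral {0..1} k + s * v"
proof -
  have "capped_integral k v = integral {0..s} (\<lambda>t. min (k t) v) + integral {s..1} (\<lambda>t. min (k t) v)"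
    unfolding capped_integral_def
    using Henstock_Kurzweil_Integration.integral_combine[OF s min_integrable_on[OF k]] by simp
  moreover have "integral {0..s} (\<lambda>t. min (k t) v) \<le> integral {0..s} (\<lambda>t::real. v)"
    by (rule integral_le) (auto intro: min_integrable_on[OF k] s)
  moreover have "integral {s..1} (\<lambda>t. min (k t) v) \<le> integral {s..1} k"
    by (rule integral_le) (auto intro: min_integrable_on[OF k] unit_valued_integrable_on[OF k] s)
  moreover have "integral {0..s} k + integral {s..1} k = integral {0..1} k"
    using Henstock_Kurzweil_Integration.integral_combine[OF s unit_valuedD(1)[OF k]] by simp
  ultimately show ?thesis using s by simp
qed

lemma capped_integral_add_integral_eq:
  assumes k: "unit_valued k" and s: "0 \<le> s" "s \<le> 1" and Z: "negligible Z"
    and above: "\<And>t. t \<in> {0<..<s} - Z \<Longrightarrow> v \<le> k t"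
    and below: "\<And>t. t \<in> {s<..<1} - Z \<Longrightarrow> k t \<le> v"
  shows "capped_integral k v + integral {0..s} k = integral {0..1} k + s * v"
proof -
  have "capped_integral k v = integral {0..s} (\<lambda>t. min (k t) v) + integral {s..1} (\<lambda>t. min (k t) v)"
    unfolding capped_integral_def
    using Henstock_Kurzweil_Integration.integral_combine[OF s min_integrable_on[OF k]] by simp
  moreover have "integral {0..s} (\<lambda>t. min (k t) v) = integral {0..s} (\<lambda>t::real. v)"
  proof (rule integral_spike[where S="Z \<union> {0, s}"])
    fix t assume "t \<in> {0..s} - (Z \<union> {0, s})"
    then show "v = min (k t) v" using above[of t] by (simp add: min_def)
  qed (use Z in auto)
  moreover have "integral {s..1} (\<lambda>t. min (k t) v) = integral {s..1} k"
  proof (rule integral_spike[where S="Z \<union> {s, 1}"])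
    fix t assume "t \<in> {s..1} - (Z \<union> {s, 1})"
    then show "k t = min (k t) v" using below[of t] by (simp add: min_def)
  qed (use Z in auto)
  moreover have "integral {0..s} k + integral {s..1} k = integral {0..1} k"
    using Henstock_Kurzweil_Integration.integral_combine[OF s unit_valuedD(1)[OF k]] by simp
  ultimately show ?thesis using s by simp
qed

lemma capped_integral_add_integral_eq_at_some_point:
  assumes k: "unit_valued k" "ae_decreasing k"
  shows "\<exists>s\<in>{0..1}. capped_integral k v + integral {0..s} k = integral {0..1} k + s * v"
proof -
  obtain Z where Z: "negligible Z" and dec: "\<And>x y. x \<in> {0<..<1} - Z \<Longrightarrow> y \<in> {0<..<1} - Z \<Longrightarrow> x < y \<Longrightarrow> k y \<le> k x"
    using k(2) unfolding ae_decreasing_def by blast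
  define A where "A = {t \<in> {0<..<1} - Z. v < k t} \<union> {0}"
  define s where "s = Sup A"
  have A: "A \<noteq> {}" "bdd_above A" unfolding A_def by (auto intro!: bdd_aboveI[of _ 1])
  have s: "0 \<le> s" "s \<le> 1" unfolding s_def using A by (auto intro: cSup_upper cSup_least simp: A_def)
  have above: "v \<le> k t" if t: "t \<in> {0<..<s} - Z" for t
  proof -
    obtain t' where t': "t' \<in> A" "t < t'" using t less_cSup_iff[OF A] s_def by auto
    then have "t' \<in> {0<..<1} - Z" "v < k t'" using t unfolding A_def by auto
    moreover have "t \<in> {0<..<1} - Z" using t s by auto
    ultimately show ?thesis using dec t'(2) by force
  qed
  have below: "k t \<le> v" if t: "t \<in> {s<..<1} - Z" for t
  proof (rule ccontr)
    assume "\<not> k t \<le> v"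
    then have "t \<in> A" using t s unfolding A_def by auto
    then show False using t cSup_upper[OF _ A(2)] s_def by fastforce
  qed
  show ?thesis using capped_integral_add_integral_eq[OF k(1) s Z above below] s by auto
qed

lemma capped_integral_add_integral_eq_at_some_level:
  assumes k: "unit_valued k" "ae_decreasing k" and s: "0 \<le> s" "s \<le> 1"
  shows "\<exists>v\<in>{0..1}. capped_integral k v + integral {0..s} k = integral {0..1} k + s * v"
proof -
  obtain Z where Z: "negligible Z" and dec: "\<And>x y. x \<in> {0<..<1} - Z \<Longrightarrow> y \<in> {0<..<1} - Z \<Longrightarrow> x < y \<Longrightarrow> k y \<le> k x"
    using k(2) unfolding ae_decreasing_def by blast
  have k01: "0 \<le> k t" "k t \<le> 1" if "t \<in> {0<..<1}" for t using unit_valuedD(2,3)[OF k(1) that] by auto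
  show ?thesis
  proof (cases "s = 0")
    case True
    have "capped_integral k 1 + integral {0..s} k = integral {0..1} k + s * 1"
      by (rule capped_integral_add_integral_eq[OF k(1) s Z]) (use True k01 in auto)
    then show ?thesis by (intro bexI[of _ 1]) auto
  next
    case False
    define T where "T = k ` ({0<..<s} - Z)"
    have "\<not> negligible {0<..<s}" using False s by (intro open_not_negligible) auto
    then obtain t0 where t0: "t0 \<in> {0<..<s} - Z" using Z negligible_subset by blast
    then have T: "T \<noteq> {}" "bdd_below T" unfolding T_def using k01 s by (auto intro!: bdd_belowI[of _ 0])
    define v where "v = Inf T"
    have above: "v \<le> k t" if "t \<in> {0<..<s} - Z" for t
      unfolding v_def T_def by (rule cInf_lower) (use that T T_def in auto)
    have below: "k t \<le> v" if t: "t \<in> {s<..<1} - Z" for t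
      unfolding v_def using T(1) t s False by (intro cInf_greatest) (auto simp: T_def intro!: dec)
    have "0 \<le> v" unfolding v_def T_def using s T by (intro cInf_greatest) (auto simp: T_def intro: k01)
    moreover have "v \<le> 1" using above[OF t0] k01[of t0] t0 s by auto
    ultimately show ?thesis using capped_integral_add_integral_eq[OF k(1) s Z above below] by auto
  qed
qed

theorem integral_le_iff_capped_integral_ge:
  assumes k1: "unit_valued k1" "ae_decreasing k1" and k2: "unit_valued k2" "ae_decreasing k2"
    and total: "integral {0..1} k1 = integral {0..1} k2"
  shows "(\<forall>s\<in>{0..1}. integral {0..s} k1 \<le> integral {0..s} k2) \<longleftrightarrow>
    (\<forall>v\<in>{0..1}. capped_integral k2 v \<le> capped_integral k1 v)"
proof safe
  fix v :: real assume H: "\<forall>s\<in>{0..1}. integral {0..s} k1 \<le> integral {0..s} k2"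
  obtain s where "s \<in> {0..1}" "capped_integral k1 v + integral {0..s} k1 = integral {0..1} k1 + s * v"
    using capped_integral_add_integral_eq_at_some_point[OF k1] by blast
  then show "capped_integral k2 v \<le> capped_integral k1 v"
    using capped_integral_add_integral_le[OF k2(1), of s v] H total by fastforce
next
  fix s :: real assume H: "\<forall>v\<in>{0..1}. capped_integral k2 v \<le> capped_integral k1 v" and s: "s \<in> {0..1}"
  obtain v where "v \<in> {0..1}" "capped_integral k2 v + integral {0..s} k2 = integral {0..1} k2 + s * v"
    using capped_integral_add_integral_eq_at_some_level[OF k2, of s] s by auto
  then show "integral {0..s} k1 \<le> integral {0..s} k2"
    using capped_integral_add_integral_le[OF k1(1), of s v] H total s by fastforce
qed

lemma capped_integral_ge_iff_capped_deriv_le: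
  assumes f: "unit_valued f" and g: "unit_valued g" and total: "integral {0..1} f = integral {0..1} g"
  shows "(\<forall>v\<in>{0..1}. capped_integral g v \<le> capped_integral f v) \<longleftrightarrow>
    (\<forall>v\<in>{0..1}. capped_integral (capped_deriv f) v \<le> capped_integral (capped_deriv g) v)"
proof -
  have "integral {0..1} (capped_deriv g) = integral {0..1} (capped_deriv f)"
    using total by (simp add: integral_capped_deriv capped_integral_1 f g)
  then have "(\<forall>s\<in>{0..1}. integral {0..s} (capped_deriv g) \<le> integral {0..s} (capped_deriv f)) \<longleftrightarrow>
      (\<forall>v\<in>{0..1}. capped_integral (capped_deriv f) v \<le> capped_integral (capped_deriv g) v)"
    using unit_valued_capped_deriv ae_decreasing_capped_deriv f g
    by (intro integral_le_iff_capped_integral_ge) auto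
  then show ?thesis by (simp add: integral_capped_deriv f g)
qed

lemma capped_integral_total_0_or_1:
  assumes k: "unit_valued k" and total: "integral {0..1} k \<in> {0, 1}" and v: "0 \<le> v" "v \<le> 1"
  shows "capped_integral k v = integral {0..1} k * v"
proof -
  have mi: "(\<lambda>t. min (k t) v) integrable_on {0..1}" by (rule min_integrable_on[OF k]) auto
  have ki: "k integrable_on {0..1}" by (rule unit_valuedD(1)[OF k])
  have open_eq: "integral {0<..<1} h = integral {0..1} h" for h :: "real \<Rightarrow> real"
    using integral_open_interval[of 0 1 h] by simp
  have "integral {0<..<1} (\<lambda>t. k t * v) \<le> integral {0<..<1} (\<lambda>t. min (k t) v)"
  proof (rule integral_le)
    show "(\<lambda>t. k t * v) integrable_on {0<..<1}" "(\<lambda>t. min (k t) v) integrable_on {0<..<1}"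
      using ki mi by (auto simp: integrable_on_open_interval_real intro: integrable_on_mult_left)
    fix t :: real assume "t \<in> {0<..<1}"
    then have "0 \<le> k t" "k t \<le> 1" using unit_valuedD(2,3)[OF k] by auto
    then show "k t * v \<le> min (k t) v" using v by (simp add: mult_left_le mult_left_le_one_le)
  qed
  then have "integral {0..1} k * v \<le> capped_integral k v"
    by (simp add: open_eq capped_integral_def)
  moreover have "capped_integral k v \<le> integral {0..1} k" "capped_integral k v \<le> v"
    unfolding capped_integral_def using integral_le[OF mi ki] integral_le[OF mi integrable_const_ivl, of v]
    by auto
  ultimately show ?thesis using total ki by auto
qed

section \<open>Decreasing rearrangement and the Schur order\<close>

lemma emeasure_lebesgue_Ico: "a \<le> b \<Longrightarrow> emeasure lebesgue {a..<b} = ennreal (b - a)"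
  by (simp add: emeasure_completion)

lemma sets_lebesgue_sublevel_antimono:
  fixes g :: "real \<Rightarrow> real"
  assumes dec: "\<And>s t. 0 < s \<Longrightarrow> s \<le> t \<Longrightarrow> t < 1 \<Longrightarrow> g t \<le> g s"
  shows "{t\<in>{0<..<1}. g t \<le> y} \<in> sets lebesgue"
proof -
  have "mono_on {0<..<1} (\<lambda>t. - g t)" unfolding mono_on_def using dec by force
  then have "(\<lambda>t. - g t) \<in> borel_measurable (restrict_space borel {0<..<1})"
    by (rule borel_measurable_mono_on_fnc)
  then have "(\<lambda>t. - g t) -` {-y..} \<inter> space (restrict_space borel {0<..<1}) \<in> sets (restrict_space borel {0<..<1})"
    by (rule measurable_sets) auto
  then have "{t\<in>{0<..<1}. g t \<le> y} \<in> sets borel"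
    by (simp add: Int_def conj_commute sets_restrict_space_iff)
  then show ?thesis by (simp add: sets_completionI_sets)
qed

lemma is_decr_rearr_bounds:
  assumes R: "is_decr_rearr f g" and f: "\<And>t. t \<in> {0<..<1} \<Longrightarrow> 0 \<le> f t \<and> f t \<le> 1"
    and t0: "t0 \<in> {0<..<1}"
  shows "0 \<le> g t0" "g t0 \<le> 1"
proof -
  have dec: "\<And>s t. 0 < s \<Longrightarrow> s \<le> t \<Longrightarrow> t < 1 \<Longrightarrow> g t \<le> g s"
   and eq: "\<And>y. emeasure lebesgue {t\<in>{0<..<1}. g t \<le> y} = emeasure lebesgue {t\<in>{0<..<1}. f t \<le> y}"
    using R unfolding is_decr_rearr_def by auto
  show "g t0 \<le> 1"
  proof (rule ccontr)
    assume "\<not> g t0 \<le> 1"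
    then have "{t\<in>{0<..<1}. g t \<le> 1} \<subseteq> {t0<..<1}" using dec t0 by (auto simp: not_le) (meson le_less_trans not_le)
    then have "emeasure lebesgue {t\<in>{0<..<1}. g t \<le> 1} \<le> emeasure lebesgue {t0<..<1}"
      by (intro emeasure_mono) auto
    moreover have "{t\<in>{0<..<1}. f t \<le> 1} = {0<..<1}" using f by auto
    ultimately have "ennreal 1 \<le> ennreal (1 - t0)" using eq t0 by (simp add: emeasure_lebesgue_Ioo)
    then show False using t0 by (simp add: ennreal_le_iff)
  qed
  show "0 \<le> g t0"
  proof (rule ccontr)
    assume ng: "\<not> 0 \<le> g t0"
    have "{t0..<1} \<subseteq> {t\<in>{0<..<1}. g t \<le> g t0}" using dec t0 by auto
    then have "emeasure lebesgue {t0..<1} \<le> emeasure lebesgue {t\<in>{0<..<1}. g t \<le> g t0}"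
      by (intro emeasure_mono sets_lebesgue_sublevel_antimono dec)
    also have "\<dots> = emeasure lebesgue {t\<in>{0<..<1}. f t \<le> g t0}" by (rule eq)
    also have "{t\<in>{0<..<1}. f t \<le> g t0} = {}" using f ng by (force simp: not_le)
    finally show False using t0 by (simp add: emeasure_lebesgue_Ico)
  qed
qed

lemma is_decr_rearr_unit_valued:
  assumes R: "is_decr_rearr f g" and f: "unit_valued f"
  shows "unit_valued g" "ae_decreasing g"
proof -
  have dec: "\<And>s t. 0 < s \<Longrightarrow> s \<le> t \<Longrightarrow> t < 1 \<Longrightarrow> g t \<le> g s"
    using R unfolding is_decr_rearr_def by auto
  have g01: "0 \<le> g t" "g t \<le> 1" if "t \<in> {0<..<1}" for t
    using is_decr_rearr_bounds[OF R _ that] unit_valuedD(2,3)[OF f] by auto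
  define g' where "g' t = (if t \<le> 0 then 1 else if 1 \<le> t then 0 else g t)" for t
  have "mono_on {0..1} (\<lambda>t. - g' t)"
    unfolding mono_on_def g'_def using dec g01 by (auto simp: not_le)
  then have "(\<lambda>t. - (- g' t)) integrable_on {0..1}" by (intro integrable_neg integrable_on_mono_on)
  then have "g integrable_on {0..1}" by (rule integrable_spike[where S="{0, 1}"]) (auto simp: g'_def)
  then show "unit_valued g" using g01 by (simp add: unit_valued_def)
  show "ae_decreasing g" unfolding ae_decreasing_def using dec by (intro exI[of _ "{}"]) auto
qed

lemma generalized_inverse_le_iff:
  fixes m :: "real \<Rightarrow> real"
  assumes antimono: "\<And>y y'. y \<le> y' \<Longrightarrow> m y' \<le> m y"
    and right_cont: "\<And>y. (\<lambda>n. m (y + inverse (real (Suc n)))) \<longlonglongrightarrow> m y"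
    and nonempty: "m b \<le> x" and bounded: "\<And>y. m y \<le> x \<Longrightarrow> a \<le> y"
  shows "Inf {y. m y \<le> x} \<le> y \<longleftrightarrow> m y \<le> x"
proof
  have ne: "{y. m y \<le> x} \<noteq> {}" and bdd: "bdd_below {y. m y \<le> x}"
    using nonempty bounded by (auto intro!: bdd_belowI[of _ a])
  assume le: "Inf {y. m y \<le> x} \<le> y"
  have "m (y + inverse (real (Suc n))) \<le> x" for n
  proof -
    have "0 < inverse (real (Suc n))" by simp
    then have "Inf {y. m y \<le> x} < y + inverse (real (Suc n))" using le by linarith
    then obtain y' where "m y' \<le> x" "y' < y + inverse (real (Suc n))"
      using cInf_less_iff[OF ne bdd] by auto
    then show ?thesis using antimono[of y' "y + inverse (real (Suc n))"] by simp
  qed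
  then show "m y \<le> x" by (intro LIMSEQ_le_const2[OF right_cont]) auto
next
  assume "m y \<le> x"
  then show "Inf {y. m y \<le> x} \<le> y" using bounded by (intro cInf_lower bdd_belowI[of _ a]) auto
qed

definition survival :: "(real \<Rightarrow> real) \<Rightarrow> real \<Rightarrow> real" where
  "survival f y = measure (lebesgue_on {0<..<1}) {t\<in>{0<..<1}. y < f t}"

lemma prob_space_lebesgue_on_Ioo_01: "prob_space (lebesgue_on {0<..<1::real})"
  by (rule prob_space_restrict_space) (simp_all add: emeasure_lebesgue_Ioo)

lemma sets_superlevel_unit_valued:
  assumes f: "unit_valued f"
  shows "{t\<in>{0<..<1}. y < f t} \<in> sets (lebesgue_on {0<..<1})"
proof -
  have "f \<in> borel_measurable (lebesgue_on {0<..<1})"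
    using unit_valuedD(1)[OF f] by (intro integrable_imp_measurable) (simp add: integrable_on_open_interval_real)
  from measurable_sets[OF this, of "{y<..}"] show ?thesis by (simp add: Int_def conj_commute)
qed

lemma survival_unit_valued:
  assumes f: "unit_valued f"
  shows "y \<le> y' \<Longrightarrow> survival f y' \<le> survival f y" and "y < 0 \<Longrightarrow> survival f y = 1"
    and "survival f 1 = 0" and "0 \<le> survival f y" and "survival f y \<le> 1"
    and "emeasure lebesgue {t\<in>{0<..<1}. f t \<le> y} = ennreal (1 - survival f y)"
proof -
  interpret P: prob_space "lebesgue_on {0<..<1::real}" by (rule prob_space_lebesgue_on_Ioo_01)
  note S = sets_superlevel_unit_valued[OF f]
  have f01: "0 \<le> f t" "f t \<le> 1" if "t \<in> {0<..<1}" for t using unit_valuedD(2,3)[OF f that] by auto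
  show "y \<le> y' \<Longrightarrow> survival f y' \<le> survival f y"
    unfolding survival_def by (rule P.finite_measure_mono[OF _ S]) auto
  show "y < 0 \<Longrightarrow> survival f y = 1"
  proof -
    assume "y < 0"
    then have "{t\<in>{0<..<1}. y < f t} = space (lebesgue_on {0<..<1})" using f01 by force
    then show ?thesis unfolding survival_def using P.prob_space by simp
  qed
  have "{t\<in>{0<..<1}. 1 < f t} = {}" using f01 by force
  then show "survival f 1 = 0" unfolding survival_def by (simp only:) simp
  show "0 \<le> survival f y" "survival f y \<le> 1" unfolding survival_def by simp_all
  let ?S = "{t\<in>{0<..<1}. y < f t}"
  have "{t\<in>{0<..<1}. f t \<le> y} = space (lebesgue_on {0<..<1}) - ?S" by auto
  then have "emeasure lebesgue {t\<in>{0<..<1}. f t \<le> y} = emeasure (lebesgue_on {0<..<1}) (space (lebesgue_on {0<..<1}) - ?S)"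
    by (subst emeasure_restrict_space) auto
  also have "\<dots> = ennreal (1 - survival f y)"
    using P.prob_compl[OF S] by (simp add: P.emeasure_eq_measure survival_def)
  finally show "emeasure lebesgue {t\<in>{0<..<1}. f t \<le> y} = ennreal (1 - survival f y)" .
qed

lemma survival_right_continuous:
  assumes f: "unit_valued f"
  shows "(\<lambda>n. survival f (y + inverse (real (Suc n)))) \<longlonglongrightarrow> survival f y"
proof -
  interpret P: prob_space "lebesgue_on {0<..<1::real}" by (rule prob_space_lebesgue_on_Ioo_01)
  define S where "S y = {t\<in>{0<..<1}. y < f t}" for y
  have "incseq (\<lambda>n. S (y + inverse (real (Suc n))))"
    unfolding incseq_def S_def by (auto simp: frac_le elim!: le_less_trans[rotated])
  moreover have "(\<Union>n. S (y + inverse (real (Suc n)))) = S y"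
  proof safe
    fix t n assume "t \<in> S (y + inverse (real (Suc n)))"
    then show "t \<in> S y" unfolding S_def by (auto elim: le_less_trans[rotated])
  next
    fix t assume t: "t \<in> S y"
    then have "0 < f t - y" unfolding S_def by simp
    then obtain n where "inverse (real (Suc n)) < f t - y" using reals_Archimedean by blast
    with t show "t \<in> (\<Union>n. S (y + inverse (real (Suc n))))" unfolding S_def by (auto intro!: exI[of _ n])
  qed
  ultimately show ?thesis
    using P.finite_Lim_measure_incseq[of "\<lambda>n. S (y + inverse (real (Suc n)))"] sets_superlevel_unit_valued[OF f]
    unfolding survival_def S_def by auto
qed

text \<open>The decreasing rearrangement is the generalized inverse of the survival function.\<close>
lemma decr_rearr_exists:
  assumes f: "unit_valued f" shows "\<exists>g. is_decr_rearr f g"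
proof -
  note m = survival_unit_valued[OF f]
  define g where "g x = Inf {y. survival f y \<le> x}" for x
  have g_le_iff: "g x \<le> y \<longleftrightarrow> survival f y \<le> x" if x: "x \<in> {0<..<1}" for x y
    unfolding g_def
  proof (rule generalized_inverse_le_iff[OF m(1) survival_right_continuous[OF f]])
    show "survival f 1 \<le> x" using m(3) x by simp
    show "0 \<le> y" if "survival f y \<le> x" for y using that x m(2)[of y] by force
  qed
  have "g t \<le> g s" if "0 < s" "s \<le> t" "t < 1" for s t
    using g_le_iff[of s "g s"] g_le_iff[of t "g s"] that by simp
  moreover have "emeasure lebesgue {t\<in>{0<..<1}. g t \<le> y} = emeasure lebesgue {t\<in>{0<..<1}. f t \<le> y}" for y
  proof -
    have "{t\<in>{0<..<1}. g t \<le> y} = (if survival f y = 0 then {0<..<1} else {survival f y..<1})"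
      using g_le_iff m(4,5)[of y] by auto
    then have "emeasure lebesgue {t\<in>{0<..<1}. g t \<le> y} = ennreal (1 - survival f y)"
      using m(4,5)[of y] by (simp add: emeasure_lebesgue_Ioo emeasure_lebesgue_Ico)
    then show ?thesis using m(6)[of y] by simp
  qed
  ultimately show ?thesis unfolding is_decr_rearr_def by (intro exI[of _ g]) auto
qed

lemma is_decr_rearr_decr_rearr: "unit_valued f \<Longrightarrow> is_decr_rearr f (decr_rearr f)"
  unfolding decr_rearr_def by (rule someI_ex[OF decr_rearr_exists])

lemma real_distribution_distr_unit_valued:
  assumes "unit_valued h"
  shows "real_distribution (distr (lebesgue_on {0..1}) borel h)"
proof -
  have "prob_space (lebesgue_on {0..1::real})"
    by (rule prob_space_restrict_space) (simp_all add: emeasure_completion)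
  moreover have "h \<in> borel_measurable (lebesgue_on {0..1})"
    using unit_valuedD(1)[OF assms] by (rule integrable_imp_measurable)
  ultimately show ?thesis
    unfolding real_distribution_def real_distribution_axioms_def by (simp add: prob_space.prob_space_distr)
qed

lemma cdf_distr_unit_valued:
  assumes h: "unit_valued h"
  shows "cdf (distr (lebesgue_on {0..1}) borel h) y = measure lebesgue {t\<in>{0<..<1}. h t \<le> y}"
proof -
  let ?A = "h -` {..y} \<inter> {0..1}"
  let ?B = "{t\<in>{0<..<1}. h t \<le> y}"
  have hm: "h \<in> borel_measurable (lebesgue_on {0..1})"
    using unit_valuedD(1)[OF h] by (rule integrable_imp_measurable)
  then have A: "?A \<in> sets lebesgue"
    using measurable_sets[OF hm, of "{..y}"] by (simp add: sets_restrict_space_iff)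
  have "cdf (distr (lebesgue_on {0..1}) borel h) y = measure lebesgue ?A"
    unfolding cdf_def2 by (simp add: measure_distr[OF hm] measure_restrict_space)
  also have "\<dots> = measure lebesgue (?B \<union> (?A \<inter> {0, 1}))"
    by (rule arg_cong[where f="measure lebesgue"]) auto
  also have "\<dots> = measure lebesgue ?B"
  proof (rule measure_Un_null_set)
    have "?B = ?A \<inter> {0<..<1}" by auto
    then show "?B \<in> sets lebesgue" using A by (simp only:) (rule sets.Int, simp_all)
    show "?A \<inter> {0, 1} \<in> null_sets lebesgue"
      using negligible_subset[of "{0, 1}" "?A \<inter> {0, 1}"] by (simp add: negligible_iff_null_sets)
  qed
  finally show ?thesis .
qed

lemma capped_integral_decr_rearr:
  assumes R: "is_decr_rearr f g" and f: "unit_valued f"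
  shows "capped_integral g v = capped_integral f v"
proof -
  let ?P = "lebesgue_on {0..1::real}"
  have g: "unit_valued g" by (rule is_decr_rearr_unit_valued(1)[OF R f])
  have "cdf (distr ?P borel g) = cdf (distr ?P borel f)"
    using R unfolding fun_eq_iff is_decr_rearr_def cdf_distr_unit_valued[OF g] cdf_distr_unit_valued[OF f]
    by (simp add: measure_def)
  then have dist: "distr ?P borel g = distr ?P borel f"
    by (rule cdf_unique[OF real_distribution_distr_unit_valued[OF g] real_distribution_distr_unit_valued[OF f]])
  have "capped_integral g v = (LINT x|distr ?P borel g. min x v)"
    using unit_valuedD(1)[OF g]
    by (simp add: capped_integral_eq_lebesgue[OF g] integral_distr integrable_imp_measurable)
  also have "\<dots> = capped_integral f v"
    using unit_valuedD(1)[OF f]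
    by (simp add: dist capped_integral_eq_lebesgue[OF f] integral_distr integrable_imp_measurable)
  finally show ?thesis .
qed

lemma lebesgue_integral_unit_valued:
  assumes k: "unit_valued k" and s: "0 \<le> s" "s \<le> 1"
  shows "(LINT t|lebesgue_on {0..s}. k t) = integral {0..s} k"
  using unit_valued_integrable_on[OF k order_refl s(2)] unit_valuedD(2,3)[OF k] s
  by (intro bounded_integrable_on_imp_lebesgue(2)[where C=1]) auto

theorem schur_le_iff_capped_integral_ge:
  assumes f: "unit_valued f" and g: "unit_valued g" and total: "integral {0..1} f = integral {0..1} g"
  shows "schur_le f g \<longleftrightarrow> (\<forall>v\<in>{0..1}. capped_integral g v \<le> capped_integral f v)"
proof -
  define F where "F = decr_rearr f"
  define G where "G = decr_rearr g"
  have RF: "is_decr_rearr f F" and RG: "is_decr_rearr g G"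
    unfolding F_def G_def by (intro is_decr_rearr_decr_rearr f g)+
  note F = is_decr_rearr_unit_valued[OF RF f] and G = is_decr_rearr_unit_valued[OF RG g]
  have total': "integral {0..1} F = integral {0..1} G"
    using capped_integral_decr_rearr[OF RF f, of 1] capped_integral_decr_rearr[OF RG g, of 1] total
    by (simp add: capped_integral_1 F(1) G(1) f g)
  then have "schur_le f g \<longleftrightarrow> (\<forall>s\<in>{0<..<1}. integral {0..s} F \<le> integral {0..s} G)"
    unfolding schur_le_def F_def[symmetric] G_def[symmetric]
    by (simp add: lebesgue_integral_unit_valued[OF F(1)] lebesgue_integral_unit_valued[OF G(1)])
  also have "\<dots> \<longleftrightarrow> (\<forall>s\<in>{0..1}. integral {0..s} F \<le> integral {0..s} G)"
  proof -
    have "{0..1} = insert 0 (insert 1 {0<..<1::real})" by auto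
    then show ?thesis using total' by simp
  qed
  also have "\<dots> \<longleftrightarrow> (\<forall>v\<in>{0..1}. capped_integral G v \<le> capped_integral F v)"
    by (rule integral_le_iff_capped_integral_ge[OF F G total'])
  finally show ?thesis by (simp add: capped_integral_decr_rearr[OF RF f] capped_integral_decr_rearr[OF RG g])
qed

section \<open>Copulas and the operator \<open>\<T>\<close>\<close>

definition unit_partial2 :: "(real \<Rightarrow> real \<Rightarrow> real) \<Rightarrow> bool" where
  "unit_partial2 C \<longleftrightarrow> (\<forall>u\<in>{0..1}. unit_valued (partial2 C u) \<and> integral {0..1} (partial2 C u) = u)"

lemma copulaD:
  assumes "copula C"
  shows "u \<in> {0..1} \<Longrightarrow> C u 0 = 0" "u \<in> {0..1} \<Longrightarrow> C 0 u = 0"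
    "u \<in> {0..1} \<Longrightarrow> C u 1 = u" "u \<in> {0..1} \<Longrightarrow> C 1 u = u"
    "0 \<le> u1 \<Longrightarrow> u1 \<le> u2 \<Longrightarrow> u2 \<le> 1 \<Longrightarrow> 0 \<le> v1 \<Longrightarrow> v1 \<le> v2 \<Longrightarrow> v2 \<le> 1 \<Longrightarrow>
      C u1 v1 + C u2 v2 - C u1 v2 - C u2 v1 \<ge> 0"
  using assms unfolding copula_def by blast+

lemma copula_section_mono_lip1:
  assumes C: "copula C" and u: "u \<in> {0..1}"
  shows "mono_lip1 (\<lambda>s. C u (max 0 (min 1 s)))"
  unfolding mono_lip1_def
proof (intro allI impI)
  fix x y :: real assume "x \<le> y"
  define a where "a = max 0 (min 1 x)"
  define b where "b = max 0 (min 1 y)"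
  have ab: "0 \<le> a" "a \<le> b" "b \<le> 1" "b - a \<le> y - x" using \<open>x \<le> y\<close> unfolding a_def b_def by auto
  have "C 0 a + C u b - C 0 b - C u a \<ge> 0" "C u a + C 1 b - C u b - C 1 a \<ge> 0"
    using copulaD(5)[OF C] u ab by auto
  moreover have "C 0 a = 0" "C 0 b = 0" "C 1 a = a" "C 1 b = b" using copulaD(2,4)[OF C] ab by auto
  ultimately show "C u a \<le> C u b \<and> C u b - C u a \<le> y - x" using ab(4) by linarith
qed

lemma copula_unit_partial2:
  assumes C: "copula C" shows "unit_partial2 C"
  unfolding unit_partial2_def
proof (intro ballI conjI)
  fix u :: real assume u: "u \<in> {0..1}"
  define \<phi> where "\<phi> s = C u (max 0 (min 1 s))" for s
  have F: "mono_lip1 \<phi>" unfolding \<phi>_def by (rule copula_section_mono_lip1[OF C u])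
  have eq: "partial2 C u t = deriv0 \<phi> t" if "t \<in> {0<..<1}" for t
    unfolding partial2_eq_deriv0 using that by (intro deriv0_cong_open[of "{0<..<1}"]) (auto simp: \<phi>_def)
  have "(deriv0 \<phi> has_integral \<phi> 1 - \<phi> 0) {0..1}" by (rule mono_lip1_has_integral_deriv0[OF F]) simp
  moreover have "\<phi> 1 - \<phi> 0 = u" using copulaD(1,3)[OF C u] by (simp add: \<phi>_def)
  ultimately have "(deriv0 \<phi> has_integral u) {0..1}" by simp
  then have int: "(partial2 C u has_integral u) {0..1}"
    by (rule has_integral_spike[where S="{0, 1}", rotated 2]) (simp_all add: eq)
  then show "integral {0..1} (partial2 C u) = u" by (rule integral_unique)
  show "unit_valued (partial2 C u)"
    unfolding unit_valued_def using int eq deriv0_mono_lip1[OF F] has_integral_integrable by fastforce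
qed

lemma partial2_Pi_cop: "partial2 Pi_cop v t = v"
proof -
  have "((\<lambda>s. Pi_cop v s) has_real_derivative v) (at t)"
    unfolding Pi_cop_def by (auto intro!: derivative_eq_intros)
  then show ?thesis unfolding partial2_def by (auto simp: real_differentiable_def DERIV_imp_deriv)
qed

lemma Top_eq_capped_integral:
  assumes "unit_valued (partial2 C u)" shows "Top C u = capped_integral (partial2 C u)"
  unfolding Top_def Defs.join_def partial2_Pi_cop using capped_integral_eq_lebesgue[OF assms] by auto

lemma partial2_Top:
  assumes "unit_valued (partial2 C u)" shows "partial2 (Top C) u = capped_deriv (partial2 C u)"
  unfolding partial2_eq_deriv0 capped_deriv_def Top_eq_capped_integral[OF assms] ..

lemma unit_partial2_Top:
  assumes C: "unit_partial2 C" shows "unit_partial2 (Top C)"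
  using C unfolding unit_partial2_def
  by (simp add: partial2_Top unit_valued_capped_deriv integral_capped_deriv capped_integral_1)

lemma le_d2S_iff_le_lo_Top:
  assumes D: "unit_partial2 D" and E: "unit_partial2 E"
  shows "le_d2S D E \<longleftrightarrow> le_lo (Top E) (Top D)"
proof -
  have "le_lo (Top E) (Top D) \<longleftrightarrow> (\<forall>u\<in>{0..1}. \<forall>v\<in>{0..1}.
      capped_integral (partial2 E u) v \<le> capped_integral (partial2 D u) v)"
    using D E by (simp add: le_lo_def unit_partial2_def Top_eq_capped_integral)
  also have "\<dots> \<longleftrightarrow> (\<forall>u\<in>{0<..<1}. \<forall>v\<in>{0..1}.
      capped_integral (partial2 E u) v \<le> capped_integral (partial2 D u) v)"
  proof -
    have "capped_integral (partial2 E u) v = capped_integral (partial2 D u) v"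
      if "u \<in> {0, 1}" "v \<in> {0..1}" for u v
      using that D E by (auto simp: unit_partial2_def capped_integral_total_0_or_1)
    moreover have "{0..1} = insert 0 (insert 1 {0<..<1::real})" by auto
    ultimately show ?thesis by auto
  qed
  also have "\<dots> \<longleftrightarrow> le_d2S D E"
    using D E by (auto simp: le_d2S_def unit_partial2_def schur_le_iff_capped_integral_ge)
  finally show ?thesis ..
qed

lemma le_lo_Top_iff_le_lo_Top_Top:
  assumes D: "unit_partial2 D" and E: "unit_partial2 E"
  shows "le_lo (Top E) (Top D) \<longleftrightarrow> le_lo (Top (Top D)) (Top (Top E))"
  using D E unit_partial2_Top[OF D] unit_partial2_Top[OF E]
  by (auto simp: le_lo_def unit_partial2_def Top_eq_capped_integral partial2_Top
      capped_integral_ge_iff_capped_deriv_le)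

theorem mainTheorem16:
  assumes "copula D" and "copula E"
  shows "(le_d2S D E \<longleftrightarrow> le_lo (Top E) (Top D)) \<and>
         (le_d2S D E \<longleftrightarrow> le_d2S (Top E) (Top D)) \<and>
         (le_d2S D E \<longleftrightarrow> le_lo (Top (Top D)) (Top (Top E))) \<and>
         (le_d2S D E \<longleftrightarrow> le_d2S (Top (Top D)) (Top (Top E)))"
proof -
  have D: "unit_partial2 D" and E: "unit_partial2 E"
    using assms by (simp_all add: copula_unit_partial2)
  note TD = unit_partial2_Top[OF D] and TE = unit_partial2_Top[OF E]
  note TTD = unit_partial2_Top[OF TD] and TTE = unit_partial2_Top[OF TE]
  show ?thesis
    using le_d2S_iff_le_lo_Top[OF D E] le_d2S_iff_le_lo_Top[OF TE TD] le_d2S_iff_le_lo_Top[OF TTD TTE]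
      le_lo_Top_iff_le_lo_Top_Top[OF D E] le_lo_Top_iff_le_lo_Top_Top[OF TE TD]
    by blast
qed

end
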